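(* Let $f:\mathbb{R}^d\to\mathbb{R}$ be differentiable with $L$-Lipschitz gradient ($L>0$) and bounded below, and let $f^*=\inf f>-\infty$. Consider parallel-step SGD iterations with $p$ processors (as defined in the context) with constant learning rate $\alpha=\sqrt{p}/\sqrt{T}$, where $T\ge 64L^2p$ is the number of iterations, and assume they satisfy elastic consistency with constant $B$. Then $$\min_{t\in\{0,\dots,T-1\}}\mathbb{E}\|\nabla f(\vec x_t)\|^2\le \frac{8(f(\vec x_0)-f^* )}{\sqrt{Tp}}+\frac{4B^2L^2p}{T}+\frac{8L\sigma^2}{\sqrt{Tp}}+\frac{16L^3B^2p\sqrt p}{T\sqrt T}.$$
   Context: All random objects live on a probability space with a filtration $(\mathcal F_t)_{t\ge0}$. Parallel-step SGD iterations with $p$ processors: $\vec x_0\in\mathbb{R}^d$ is deterministic. For each iteration $t\ge0$ a set $I_t\subseteq\{1,\dots,p\}$ with $p/2\le|I_t|\le p$ is given (fixed independently of the algorithm's randomness). Each processor $i\in I_t$ holds a view $\vec v_t^i$; $\vec x_t$ and all $\vec v_t^i$ are $\mathcal F_t$-measurable. Each $i\in I_t$ computes a stochastic gradient $\tilde G(\vec v_t^i)$ ($\mathcal F_{t+1}$-measurable); conditionally on $\mathcal F_t$ these are independent across $i\in I_t$, with $\mathbb{E}[\tilde G(\vec v_t^i)\mid\mathcal F_t]=\nabla f(\vec v_t^i)$ and $\mathbb{E}[\|\tilde G(\vec v_t^i)-\nabla f(\vec v_t^i)\|^2\mid\mathcal F_t]\le\sigma^2$. The global parameter is updated by $\vec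 x_{t+1}=\vec x_t-\frac{\alpha}{p}\sum_{i\in I_t}\tilde G(\vec v_t^i)$. Elastic consistency with constant $B>0$ (independent of $t$) means $\mathbb{E}\|\vec x_t-\vec v_t^i\|^2\le\alpha^2B^2$ for all $t$ and all $i\in I_t$. *)

theory Defs
  imports "HOL-Probability.Probability"
begin

text \<open>Taking A i = UNIV for some indices covers all subfamilies.\<close>
definition cond_indep_vars ::
  "'a measure \<Rightarrow> 'a measure \<Rightarrow> ('i \<Rightarrow> 'a \<Rightarrow> 'b::topological_space) \<Rightarrow> 'i set \<Rightarrow> bool" where
  "cond_indep_vars M F X J \<longleftrightarrow>
     (\<forall>A. (\<forall>i\<in>J. A i \<in> sets borel) \<longrightarrow>
        (AE \<omega> in M. real_cond_exp M F (indicator (\<Inter>i\<in>J. X i -` A i \<inter> space M)) \<omega>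
           = (\<Prod>i\<in>J. real_cond_exp M F (indicator (X i -` A i \<inter> space M)) \<omega>)))"

end

theory Submission
  imports Defs
begin

text \<open>Because the gradient is L-Lipschitz, one step changes E f(x) by at most
  -(\<alpha>/p) E[\<nabla>f(x) \<bullet> \<Sigma> g] + L (\<alpha>/p)^2 E|\<Sigma> g|^2, where \<Sigma> g is the sum of the stochastic gradients.
  Unbiasedness replaces them by the true gradients at the views in the first term, and in the second
  conditional independence kills the cross terms of the noise, which therefore costs only
  |I t| \<sigma>^2. Elastic consistency keeps the gradients at the views within L \<alpha> B of \<nabla>f(x) in mean
  square, so each step lowers E f(x) by (\<alpha>/4) E|\<nabla>f(x)|^2 up to an error of order
  \<alpha>^3 L^2 B^2 + L \<alpha>^2 \<sigma>^2/p. Telescoping over T steps bounds the average, hence the minimum, of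
  E|\<nabla>f(x t)|^2, and \<alpha> = \<surd>p/\<surd>T balances the resulting terms.\<close>

section \<open>Deterministic estimates\<close>

lemma lipschitz_gradient_taylor_bound:
  fixes f :: "'v::real_inner \<Rightarrow> real"
  assumes grad_f: "\<And>y. (f has_derivative (\<lambda>h. grad y \<bullet> h)) (at y)"
    and lip: "\<And>y z. norm (grad y - grad z) \<le> L * norm (y - z)"
    and L: "L \<ge> 0"
  shows "\<bar>f y - f x - grad x \<bullet> (y - x)\<bar> \<le> L * (norm (y - x))\<^sup>2"
proof -
  define d where "d = y - x"
  have der: "((\<lambda>s. f (x + s *\<^sub>R d)) has_derivative (\<lambda>h. grad (x + s *\<^sub>R d) \<bullet> (h *\<^sub>R d)))
      (at s within {0..1})" for s
  proof -
    have "((\<lambda>s. x + s *\<^sub>R d) has_derivative (\<lambda>h. h *\<^sub>R d)) (at s within {0..1})"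
      by (auto intro!: derivative_eq_intros)
    from has_derivative_compose[OF this grad_f] show ?thesis by simp
  qed
  obtain s where s: "s \<in> {0..1}"
    and mvt: "f (x + 1 *\<^sub>R d) - f (x + 0 *\<^sub>R d) = grad (x + s *\<^sub>R d) \<bullet> ((1 - 0) *\<^sub>R d)"
    using mvt_very_simple[of 0 1 "\<lambda>s. f (x + s *\<^sub>R d)", OF _ der] by auto
  have "\<bar>(grad (x + s *\<^sub>R d) - grad x) \<bullet> d\<bar> \<le> norm (grad (x + s *\<^sub>R d) - grad x) * norm d"
    by (rule Cauchy_Schwarz_ineq2)
  also have "\<dots> \<le> L * norm (s *\<^sub>R d) * norm d"
    using lip[of "x + s *\<^sub>R d" x] by (simp add: mult_right_mono)
  also have "\<dots> \<le> L * norm d * norm d"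
    using s L by (intro mult_right_mono mult_left_mono) (auto simp: mult_left_le_one_le)
  finally show ?thesis
    using mvt unfolding d_def by (simp add: inner_diff_left power2_eq_square)
qed

lemma power2_norm_sum_le_card:
  fixes h :: "'i \<Rightarrow> 'v::real_normed_vector"
  shows "(norm (\<Sum>i\<in>S. h i))\<^sup>2 \<le> real (card S) * (\<Sum>i\<in>S. (norm (h i))\<^sup>2)"
proof -
  have "(norm (\<Sum>i\<in>S. h i))\<^sup>2 \<le> (\<Sum>i\<in>S. norm (h i))\<^sup>2"
    by (simp add: norm_sum power_mono)
  also have "\<dots> \<le> (\<Sum>i\<in>S. (norm (h i))\<^sup>2) * real (card S)"
    by (rule sum_squared_le_sum_of_squares)
  finally show ?thesis by (simp add: mult.commute)
qed

lemma power2_norm_sum_eq_sum_inner: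
  fixes h :: "'i \<Rightarrow> 'v::real_inner"
  shows "(norm (\<Sum>i\<in>S. h i))\<^sup>2 = (\<Sum>i\<in>S. \<Sum>j\<in>S. h i \<bullet> h j)"
  by (simp add: power2_norm_eq_inner inner_sum_left inner_sum_right, rule sum.swap)

text \<open>The deterministic core of one descent step: g is the gradient at the iterate, the h i are
  the gradients at the views.\<close>

lemma inner_sum_norm_sum_descent_le:
  fixes g :: "'v::real_inner" and h :: "'i \<Rightarrow> 'v"
  assumes "a \<ge> 0" "L \<ge> 0" "L * a * real (card S) \<le> 1/2"
    and e: "\<And>i. i \<in> S \<Longrightarrow> (norm (g - h i))\<^sup>2 \<le> e i"
  shows "- a * (\<Sum>i\<in>S. g \<bullet> h i) + L * a\<^sup>2 * (norm (\<Sum>i\<in>S. h i))\<^sup>2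
    \<le> - (a * real (card S) / 2) * (norm g)\<^sup>2 + (a / 2) * (\<Sum>i\<in>S. e i)"
proof -
  let ?n = "real (card S)"
  let ?H = "\<Sum>i\<in>S. (norm (h i))\<^sup>2"
  have "- (g \<bullet> h i) \<le> - (norm g)\<^sup>2 / 2 - (norm (h i))\<^sup>2 / 2 + e i / 2" if "i \<in> S" for i
    using e[OF that] by (simp add: power2_norm_eq_inner inner_diff_left inner_diff_right inner_commute)
  then have "(\<Sum>i\<in>S. - (g \<bullet> h i)) \<le> (\<Sum>i\<in>S. - (norm g)\<^sup>2 / 2 - (norm (h i))\<^sup>2 / 2 + e i / 2)"
    by (rule sum_mono)
  then have inner: "- (\<Sum>i\<in>S. g \<bullet> h i) \<le> - ?n * (norm g)\<^sup>2 / 2 - ?H / 2 + (\<Sum>i\<in>S. e i) / 2"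
    by (simp add: sum.distrib sum_subtractf sum_divide_distrib sum_negf)
  have "L * a\<^sup>2 * (norm (\<Sum>i\<in>S. h i))\<^sup>2 \<le> L * a\<^sup>2 * (?n * ?H)"
    using power2_norm_sum_le_card assms(2) by (intro mult_left_mono) auto
  also have "\<dots> = (L * a * ?n) * (a * ?H)" by (simp add: power2_eq_square algebra_simps)
  also have "\<dots> \<le> (1/2) * (a * ?H)"
    using assms(1,3) by (intro mult_right_mono) (auto simp: sum_nonneg)
  finally have "L * a\<^sup>2 * (norm (\<Sum>i\<in>S. h i))\<^sup>2 \<le> a * ?H / 2" by simp
  moreover have "- a * (\<Sum>i\<in>S. g \<bullet> h i) \<le> a * (- ?n * (norm g)\<^sup>2 / 2 - ?H / 2 + (\<Sum>i\<in>S. e i) / 2)"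
    using mult_left_mono[OF inner assms(1)] by simp
  ultimately show ?thesis by (simp add: algebra_simps)
qed

section \<open>Square-integrable random variables\<close>

definition square_integrable :: "'a measure \<Rightarrow> ('a \<Rightarrow> 'v::real_normed_vector) \<Rightarrow> bool" where
  "square_integrable M h \<longleftrightarrow> h \<in> borel_measurable M \<and> integrable M (\<lambda>\<omega>. (norm (h \<omega>))\<^sup>2)"

lemma square_integrableD:
  "square_integrable M h \<Longrightarrow> h \<in> borel_measurable M"
  "square_integrable M h \<Longrightarrow> integrable M (\<lambda>\<omega>. (norm (h \<omega>))\<^sup>2)"
  by (auto simp: square_integrable_def)

lemma square_integrableI_nn_integral:
  "h \<in> borel_measurable M \<Longrightarrow> (\<integral>\<^sup>+\<omega>. ennreal ((norm (h \<omega>))\<^sup>2) \<partial>M) < \<infinity> \<Longrightarrow> square_integrable M h"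
  unfolding square_integrable_def by (auto intro!: integrableI_bounded)

lemma square_integrable_cong:
  "h \<in> borel_measurable M \<Longrightarrow> (\<And>\<omega>. \<omega> \<in> space M \<Longrightarrow> h \<omega> = k \<omega>) \<Longrightarrow> square_integrable M k
    \<Longrightarrow> square_integrable M h"
  unfolding square_integrable_def by (metis (no_types, lifting) Bochner_Integration.integrable_cong)

lemma integral_eq_nn_integral_power2_norm:
  "square_integrable M h
    \<Longrightarrow> (\<integral>\<^sup>+\<omega>. ennreal ((norm (h \<omega>))\<^sup>2) \<partial>M) = ennreal (\<integral>\<omega>. (norm (h \<omega>))\<^sup>2 \<partial>M)"
  by (rule nn_integral_eq_integral) (auto dest: square_integrableD)

lemma square_integrable_zero: "square_integrable M (\<lambda>_. 0)"
  by (simp add: square_integrable_def)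

lemma square_integrable_add:
  fixes h k :: "'a \<Rightarrow> 'v::{real_normed_vector, second_countable_topology}"
  assumes "square_integrable M h" "square_integrable M k"
  shows "square_integrable M (\<lambda>\<omega>. h \<omega> + k \<omega>)"
  unfolding square_integrable_def
proof
  have [measurable]: "h \<in> borel_measurable M" "k \<in> borel_measurable M"
    using assms(1,2)[THEN square_integrableD(1)] by auto
  show "(\<lambda>\<omega>. h \<omega> + k \<omega>) \<in> borel_measurable M" by measurable
  have "integrable M (\<lambda>\<omega>. 2 * (norm (h \<omega>))\<^sup>2 + 2 * (norm (k \<omega>))\<^sup>2)"
    using assms(1,2)[THEN square_integrableD(2)] by auto
  then show "integrable M (\<lambda>\<omega>. (norm (h \<omega> + k \<omega>))\<^sup>2)"
  proof (rule Bochner_Integration.integrable_bound)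
    have "(norm (h \<omega> + k \<omega>))\<^sup>2 \<le> (norm (h \<omega>) + norm (k \<omega>))\<^sup>2" for \<omega>
      by (simp add: norm_triangle_ineq power_mono)
    also have "\<dots> \<omega> \<le> 2 * (norm (h \<omega>))\<^sup>2 + 2 * (norm (k \<omega>))\<^sup>2" for \<omega>
      using sum_squares_bound[of "norm (h \<omega>)" "norm (k \<omega>)"] by (simp add: power2_sum)
    finally show "AE \<omega> in M. norm ((norm (h \<omega> + k \<omega>))\<^sup>2) \<le> norm (2 * (norm (h \<omega>))\<^sup>2 + 2 * (norm (k \<omega>))\<^sup>2)"
      by simp
  qed measurable
qed

lemma square_integrable_scaleR:
  "square_integrable M h \<Longrightarrow> square_integrable M (\<lambda>\<omega>. c *\<^sub>R h \<omega>)"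
  by (auto simp: square_integrable_def power_mult_distrib)

lemma square_integrable_diff:
  fixes h k :: "'a \<Rightarrow> 'v::{real_normed_vector, second_countable_topology}"
  shows "square_integrable M h \<Longrightarrow> square_integrable M k \<Longrightarrow> square_integrable M (\<lambda>\<omega>. h \<omega> - k \<omega>)"
  using square_integrable_add[of M h "\<lambda>\<omega>. (-1) *\<^sub>R k \<omega>"] square_integrable_scaleR[of M k "-1"] by simp

lemma square_integrable_sum:
  fixes h :: "'i \<Rightarrow> 'a \<Rightarrow> 'v::{real_normed_vector, second_countable_topology}"
  shows "(\<And>i. i \<in> S \<Longrightarrow> square_integrable M (h i)) \<Longrightarrow> square_integrable M (\<lambda>\<omega>. \<Sum>i\<in>S. h i \<omega>)"
  by (induction S rule: infinite_finite_induct) (auto simp: square_integrable_zero square_integrable_add)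

lemma integrable_abs_le_norm_mult:
  fixes h :: "'a \<Rightarrow> 'v::real_normed_vector" and k :: "'a \<Rightarrow> 'w::real_normed_vector"
  assumes "square_integrable M h" "square_integrable M k" "g \<in> borel_measurable M"
    and "\<And>\<omega>. \<bar>g \<omega>\<bar> \<le> norm (h \<omega>) * norm (k \<omega>)"
  shows "integrable M g"
proof -
  have "integrable M (\<lambda>\<omega>. (norm (h \<omega>))\<^sup>2 + (norm (k \<omega>))\<^sup>2)"
    using assms(1,2)[THEN square_integrableD(2)] by auto
  then show ?thesis
  proof (rule Bochner_Integration.integrable_bound)
    show "AE \<omega> in M. norm (g \<omega>) \<le> norm ((norm (h \<omega>))\<^sup>2 + (norm (k \<omega>))\<^sup>2)"
    proof (rule AE_I2)
      fix \<omega>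
      have "\<bar>g \<omega>\<bar> \<le> norm (h \<omega>) * norm (k \<omega>)" by (rule assms(4))
      also have "\<dots> \<le> (norm (h \<omega>))\<^sup>2 + (norm (k \<omega>))\<^sup>2"
        using sum_squares_bound[of "norm (h \<omega>)" "norm (k \<omega>)"]
          mult_nonneg_nonneg[OF norm_ge_zero norm_ge_zero, of "h \<omega>" "k \<omega>"] by linarith
      finally show "norm (g \<omega>) \<le> norm ((norm (h \<omega>))\<^sup>2 + (norm (k \<omega>))\<^sup>2)" by simp
    qed
  qed (use assms in simp)
qed

lemma integrable_inner:
  fixes h k :: "'a \<Rightarrow> 'v::{real_inner, second_countable_topology}"
  assumes "square_integrable M h" "square_integrable M k"
  shows "integrable M (\<lambda>\<omega>. h \<omega> \<bullet> k \<omega>)"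
proof (rule integrable_abs_le_norm_mult[OF assms])
  have [measurable]: "h \<in> borel_measurable M" "k \<in> borel_measurable M"
    using assms(1,2)[THEN square_integrableD(1)] by auto
  show "(\<lambda>\<omega>. h \<omega> \<bullet> k \<omega>) \<in> borel_measurable M" by measurable
qed (rule Cauchy_Schwarz_ineq2)

lemma integrable_inner_Basis_mult:
  fixes h k :: "'a \<Rightarrow> 'v::euclidean_space"
  assumes "square_integrable M h" "square_integrable M k" "b \<in> Basis" "c \<in> Basis"
  shows "integrable M (\<lambda>\<omega>. (h \<omega> \<bullet> b) * (k \<omega> \<bullet> c))"
proof (rule integrable_abs_le_norm_mult[OF assms(1,2)])
  have [measurable]: "h \<in> borel_measurable M" "k \<in> borel_measurable M"
    using assms(1,2)[THEN square_integrableD(1)] by auto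
  show "(\<lambda>\<omega>. (h \<omega> \<bullet> b) * (k \<omega> \<bullet> c)) \<in> borel_measurable M" by measurable
  show "\<bar>(h \<omega> \<bullet> b) * (k \<omega> \<bullet> c)\<bar> \<le> norm (h \<omega>) * norm (k \<omega>)" for \<omega>
    unfolding abs_mult using assms(3,4) by (intro mult_mono) (auto simp: Basis_le_norm)
qed

lemma integral_inner_eq_sum_Basis:
  fixes h k :: "'a \<Rightarrow> 'v::euclidean_space"
  assumes "square_integrable M h" "square_integrable M k"
  shows "(\<integral>\<omega>. h \<omega> \<bullet> k \<omega> \<partial>M) = (\<Sum>b\<in>Basis. \<integral>\<omega>. (h \<omega> \<bullet> b) * (k \<omega> \<bullet> b) \<partial>M)"
proof -
  have "(\<integral>\<omega>. h \<omega> \<bullet> k \<omega> \<partial>M) = (\<integral>\<omega>. (\<Sum>b\<in>Basis. (h \<omega> \<bullet> b) * (k \<omega> \<bullet> b)) \<partial>M)"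
    by (simp add: euclidean_inner[of "h _" "k _"])
  also have "\<dots> = (\<Sum>b\<in>Basis. \<integral>\<omega>. (h \<omega> \<bullet> b) * (k \<omega> \<bullet> b) \<partial>M)"
    by (rule Bochner_Integration.integral_sum) (rule integrable_inner_Basis_mult[OF assms])
  finally show ?thesis .
qed

context finite_measure
begin

lemma square_integrable_const: "square_integrable M (\<lambda>_. c)"
  by (simp add: square_integrable_def)

lemma square_integrable_lipschitz_comp:
  fixes \<phi> :: "'v::real_normed_vector \<Rightarrow> 'w::real_normed_vector"
  assumes h: "square_integrable M h"
    and lip: "\<And>y z. norm (\<phi> y - \<phi> z) \<le> L * norm (y - z)" and L: "L \<ge> 0"
  shows "square_integrable M (\<lambda>\<omega>. \<phi> (h \<omega>))"
  unfolding square_integrable_def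
proof
  have "L-lipschitz_on UNIV \<phi>"
    using lip L by (auto simp: lipschitz_on_def dist_norm)
  then have [measurable]: "\<phi> \<in> borel_measurable borel"
    by (intro borel_measurable_continuous_onI lipschitz_on_continuous_on)
  have [measurable]: "h \<in> borel_measurable M" using h by (rule square_integrableD)
  show "(\<lambda>\<omega>. \<phi> (h \<omega>)) \<in> borel_measurable M" by measurable
  have "integrable M (\<lambda>\<omega>. 2 * (norm (\<phi> 0))\<^sup>2 + 2 * L\<^sup>2 * (norm (h \<omega>))\<^sup>2)"
    using square_integrableD(2)[OF h] by auto
  then show "integrable M (\<lambda>\<omega>. (norm (\<phi> (h \<omega>)))\<^sup>2)"
  proof (rule Bochner_Integration.integrable_bound)
    have "norm (\<phi> z) \<le> norm (\<phi> 0) + L * norm z" for z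
      using lip[of z 0] norm_triangle_ineq2[of "\<phi> z" "\<phi> 0"] by simp
    then have "(norm (\<phi> z))\<^sup>2 \<le> (norm (\<phi> 0) + L * norm z)\<^sup>2" for z
      by (simp add: power_mono)
    also have "\<dots> z \<le> 2 * (norm (\<phi> 0))\<^sup>2 + 2 * L\<^sup>2 * (norm z)\<^sup>2" for z
      using sum_squares_bound[of "norm (\<phi> 0)" "L * norm z"] by (simp add: power2_sum power_mult_distrib)
    finally show "AE \<omega> in M. norm ((norm (\<phi> (h \<omega>)))\<^sup>2) \<le> norm (2 * (norm (\<phi> 0))\<^sup>2 + 2 * L\<^sup>2 * (norm (h \<omega>))\<^sup>2)"
      by simp
  qed measurable
qed

lemma integrable_lipschitz_gradient_comp:
  fixes f :: "'v::{real_inner, second_countable_topology} \<Rightarrow> real"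
  assumes h: "square_integrable M h"
    and grad_f: "\<And>y. (f has_derivative (\<lambda>h. grad y \<bullet> h)) (at y)"
    and lip: "\<And>y z. norm (grad y - grad z) \<le> L * norm (y - z)" and L: "L \<ge> 0"
  shows "integrable M (\<lambda>\<omega>. f (h \<omega>))"
proof -
  have "continuous_on UNIV f"
    using grad_f by (intro continuous_at_imp_continuous_on ballI has_derivative_continuous) auto
  then have [measurable]: "f \<in> borel_measurable borel" by (rule borel_measurable_continuous_onI)
  have [measurable]: "h \<in> borel_measurable M" using h by (rule square_integrableD)
  let ?c = "\<bar>f 0\<bar> + (norm (grad 0))\<^sup>2"
  have "integrable M (\<lambda>\<omega>. ?c + (1 + L) * (norm (h \<omega>))\<^sup>2)"
    using square_integrableD(2)[OF h] by auto
  then show ?thesis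
  proof (rule Bochner_Integration.integrable_bound)
    have "\<bar>f y\<bar> \<le> ?c + (1 + L) * (norm y)\<^sup>2" for y
    proof -
      have "\<bar>f y - f 0 - grad 0 \<bullet> y\<bar> \<le> L * (norm y)\<^sup>2"
        using lipschitz_gradient_taylor_bound[OF grad_f lip L, of y 0] by simp
      moreover have "\<bar>grad 0 \<bullet> y\<bar> \<le> (norm (grad 0))\<^sup>2 + (norm y)\<^sup>2"
        using Cauchy_Schwarz_ineq2[of "grad 0" y] sum_squares_bound[of "norm (grad 0)" "norm y"]
          mult_nonneg_nonneg[of "norm (grad 0)" "norm y"] by simp
      ultimately show ?thesis by (simp add: algebra_simps)
    qed
    then show "AE \<omega> in M. norm (f (h \<omega>)) \<le> norm (?c + (1 + L) * (norm (h \<omega>))\<^sup>2)"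
      using L by simp
  qed simp
qed

end

section \<open>Conditionally independent random variables\<close>

lemma nn_integral_comp_mult_eqI:
  fixes Y :: "'a \<Rightarrow> 'v::topological_space" and a b :: "'a \<Rightarrow> ennreal"
  assumes Y[measurable]: "Y \<in> borel_measurable M" and a[measurable]: "a \<in> borel_measurable M"
    and b[measurable]: "b \<in> borel_measurable M"
    and indicator: "\<And>A. A \<in> sets borel \<Longrightarrow> (\<integral>\<^sup>+\<omega>. indicator A (Y \<omega>) * a \<omega> \<partial>M) = (\<integral>\<^sup>+\<omega>. indicator A (Y \<omega>) * b \<omega> \<partial>M)"
    and u: "u \<in> borel_measurable borel"
  shows "(\<integral>\<^sup>+\<omega>. u (Y \<omega>) * a \<omega> \<partial>M) = (\<integral>\<^sup>+\<omega>. u (Y \<omega>) * b \<omega> \<partial>M)"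
  using u
proof (induction rule: borel_measurable_induct)
  case (cong f g)
  then have "f = g" by auto
  then show ?case using cong by simp
next
  case (set A)
  then show ?case by (rule indicator)
next
  case (mult u c)
  have [measurable]: "u \<in> borel_measurable borel" using mult by auto
  have "(\<integral>\<^sup>+\<omega>. c * u (Y \<omega>) * a \<omega> \<partial>M) = c * (\<integral>\<^sup>+\<omega>. u (Y \<omega>) * a \<omega> \<partial>M)"
    by (subst nn_integral_cmult[symmetric]) (auto simp: mult.assoc)
  moreover have "(\<integral>\<^sup>+\<omega>. c * u (Y \<omega>) * b \<omega> \<partial>M) = c * (\<integral>\<^sup>+\<omega>. u (Y \<omega>) * b \<omega> \<partial>M)"
    by (subst nn_integral_cmult[symmetric]) (auto simp: mult.assoc)
  ultimately show ?case using mult by simp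
next
  case (add u v)
  have [measurable]: "u \<in> borel_measurable borel" "v \<in> borel_measurable borel" using add by auto
  have "(\<integral>\<^sup>+\<omega>. (v (Y \<omega>) + u (Y \<omega>)) * a \<omega> \<partial>M) = (\<integral>\<^sup>+\<omega>. v (Y \<omega>) * a \<omega> \<partial>M) + (\<integral>\<^sup>+\<omega>. u (Y \<omega>) * a \<omega> \<partial>M)"
    by (subst nn_integral_add[symmetric]) (auto simp: distrib_right)
  moreover have "(\<integral>\<^sup>+\<omega>. (v (Y \<omega>) + u (Y \<omega>)) * b \<omega> \<partial>M) = (\<integral>\<^sup>+\<omega>. v (Y \<omega>) * b \<omega> \<partial>M) + (\<integral>\<^sup>+\<omega>. u (Y \<omega>) * b \<omega> \<partial>M)"
    by (subst nn_integral_add[symmetric]) (auto simp: distrib_right)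
  ultimately show ?case using add by simp
next
  case (seq U)
  have "incseq U" using seq by auto
  note [measurable] = seq(1)
  have sup: "(\<integral>\<^sup>+\<omega>. (SUP i. U i) (Y \<omega>) * c \<omega> \<partial>M) = (SUP i. \<integral>\<^sup>+\<omega>. U i (Y \<omega>) * c \<omega> \<partial>M)"
    if [measurable]: "c \<in> borel_measurable M" for c :: "'a \<Rightarrow> ennreal"
  proof -
    have "(\<integral>\<^sup>+\<omega>. (SUP i. U i) (Y \<omega>) * c \<omega> \<partial>M) = (\<integral>\<^sup>+\<omega>. (SUP i. U i (Y \<omega>) * c \<omega>) \<partial>M)"
      by (simp add: SUP_mult_right_ennreal image_comp)
    also have "\<dots> = (SUP i. \<integral>\<^sup>+\<omega>. U i (Y \<omega>) * c \<omega> \<partial>M)"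
    proof (rule nn_integral_monotone_convergence_SUP)
      show "incseq (\<lambda>i \<omega>. U i (Y \<omega>) * c \<omega>)"
        using \<open>incseq U\<close> by (auto simp: incseq_def le_fun_def intro!: mult_right_mono)
    qed simp
    finally show ?thesis .
  qed
  show ?case using seq by (simp only: sup a b)
qed

lemma ennreal_enn2real_mult:
  fixes x y :: ennreal
  assumes "x * y \<noteq> \<top>"
  shows "ennreal (enn2real x * enn2real y) = x * y"
proof (cases "x = \<top> \<or> y = \<top>")
  case True
  then have "x = 0 \<or> y = 0" using assms by (auto simp: ennreal_mult_eq_top_iff)
  then show ?thesis by auto
next
  case False
  then show ?thesis by (simp add: ennreal_mult'' ennreal_enn2real_if)
qed

lemma ennreal_mult_le_abs_mult: "ennreal x * ennreal y \<le> ennreal \<bar>x * y\<bar>"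
  by (cases "x \<ge> 0 \<and> y \<ge> 0") (auto simp: ennreal_mult[symmetric] abs_mult ennreal_neg)

lemma
  fixes a b :: "'a \<Rightarrow> ennreal"
  assumes [measurable]: "a \<in> borel_measurable M" "b \<in> borel_measurable M"
    and finite: "(\<integral>\<^sup>+\<omega>. a \<omega> * b \<omega> \<partial>M) < \<infinity>"
  shows integrable_enn2real_mult: "integrable M (\<lambda>\<omega>. enn2real (a \<omega>) * enn2real (b \<omega>))"
    and integral_enn2real_mult:
      "(\<integral>\<omega>. enn2real (a \<omega>) * enn2real (b \<omega>) \<partial>M) = enn2real (\<integral>\<^sup>+\<omega>. a \<omega> * b \<omega> \<partial>M)"
proof -
  have "AE \<omega> in M. a \<omega> * b \<omega> \<noteq> \<infinity>"
    using finite by (intro nn_integral_PInf_AE) auto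
  then have "AE \<omega> in M. ennreal (enn2real (a \<omega>) * enn2real (b \<omega>)) = a \<omega> * b \<omega>"
    by eventually_elim (simp add: ennreal_enn2real_mult)
  then have eq: "(\<integral>\<^sup>+\<omega>. ennreal (enn2real (a \<omega>) * enn2real (b \<omega>)) \<partial>M) = (\<integral>\<^sup>+\<omega>. a \<omega> * b \<omega> \<partial>M)"
    by (rule nn_integral_cong_AE)
  show "integrable M (\<lambda>\<omega>. enn2real (a \<omega>) * enn2real (b \<omega>))"
    using eq finite by (intro integrableI_bounded) auto
  show "(\<integral>\<omega>. enn2real (a \<omega>) * enn2real (b \<omega>) \<partial>M) = enn2real (\<integral>\<^sup>+\<omega>. a \<omega> * b \<omega> \<partial>M)"
    by (subst integral_eq_nn_integral) (auto simp: eq)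
qed

context sigma_finite_subalgebra
begin

lemma real_cond_exp_eq_nn_cond_exp:
  assumes "integrable M f" "\<And>\<omega>. f \<omega> \<ge> 0"
  shows "AE \<omega> in M. ennreal (real_cond_exp M F f \<omega>) = nn_cond_exp M F (\<lambda>\<omega>. ennreal (f \<omega>)) \<omega>"
proof -
  have [measurable]: "f \<in> borel_measurable M" using assms(1) by auto
  have zero: "(\<lambda>\<omega>. ennreal (- f \<omega>)) = (\<lambda>_. 0)" using assms(2) by (simp add: ennreal_neg)
  have "AE \<omega> in M. 0 = nn_cond_exp M F (\<lambda>_. 0) \<omega>"
    by (rule nn_cond_exp_F_meas) auto
  then have neg: "AE \<omega> in M. nn_cond_exp M F (\<lambda>\<omega>. ennreal (- f \<omega>)) \<omega> = 0"
    unfolding zero by auto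
  have "(\<integral>\<^sup>+\<omega>. nn_cond_exp M F (\<lambda>\<omega>. ennreal (f \<omega>)) \<omega> \<partial>M)
      = (\<integral>\<^sup>+\<omega>. 1 * nn_cond_exp M F (\<lambda>\<omega>. ennreal (f \<omega>)) \<omega> \<partial>M)"
    by simp
  also have "\<dots> = (\<integral>\<^sup>+\<omega>. 1 * ennreal (f \<omega>) \<partial>M)"
    by (rule nn_cond_exp_intg) auto
  also have "\<dots> < \<infinity>" using assms(1) by (simp add: integrable_iff_bounded assms(2))
  finally have "AE \<omega> in M. nn_cond_exp M F (\<lambda>\<omega>. ennreal (f \<omega>)) \<omega> \<noteq> \<infinity>"
    by (intro nn_integral_PInf_AE) auto
  with neg show ?thesis
    by eventually_elim (simp add: real_cond_exp_def ennreal_enn2real_if)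
qed

end

context finite_measure_subalgebra
begin

lemma real_cond_exp_indicator_space: "AE \<omega> in M. real_cond_exp M F (indicator (space M)) \<omega> = 1"
proof -
  have "space F = space M" using subalg by (simp add: subalgebra_def)
  then have "indicator (space M) \<in> (borel_measurable F :: ('a \<Rightarrow> real) set)"
    by (metis sets.top borel_measurable_indicator)
  then have "AE \<omega> in M. real_cond_exp M F (indicator (space M)) \<omega> = indicator (space M) \<omega>"
    by (intro real_cond_exp_F_meas) (auto simp: integrable_indicator_iff less_top[symmetric])
  then show ?thesis by (rule AE_mp) (rule AE_I2, simp)
qed

lemma cond_indep_vars_real_cond_exp_Int:
  assumes ci: "cond_indep_vars M F X J" and "finite J" "i \<in> J" "j \<in> J" "i \<noteq> j"
    and "A \<in> sets borel" "A' \<in> sets borel"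
  shows "AE \<omega> in M. real_cond_exp M F (indicator (X i -` A \<inter> X j -` A' \<inter> space M)) \<omega>
    = real_cond_exp M F (indicator (X i -` A \<inter> space M)) \<omega> * real_cond_exp M F (indicator (X j -` A' \<inter> space M)) \<omega>"
proof -
  define B where "B = (\<lambda>k. if k = i then A else if k = j then A' else UNIV)"
  define E where "E = (\<lambda>k. X k -` B k \<inter> space M)"
  have "\<forall>k\<in>J. B k \<in> sets borel" using assms by (simp add: B_def)
  with ci have indep: "AE \<omega> in M. real_cond_exp M F (indicator (\<Inter>k\<in>J. E k)) \<omega>
      = (\<Prod>k\<in>J. real_cond_exp M F (indicator (E k)) \<omega>)"
    unfolding cond_indep_vars_def E_def by blast
  have Inter: "(\<Inter>k\<in>J. E k) = X i -` A \<inter> X j -` A' \<inter> space M"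
    using assms by (auto simp: E_def B_def)
  have other: "E k = space M" if "k \<notin> {i, j}" for k
    using that by (simp add: E_def B_def)
  show ?thesis
    using indep real_cond_exp_indicator_space
  proof eventually_elim
    case (elim \<omega>)
    have "(\<Prod>k\<in>J. real_cond_exp M F (indicator (E k)) \<omega>) = (\<Prod>k\<in>{i, j}. real_cond_exp M F (indicator (E k)) \<omega>)"
      using assms elim(2) other by (intro prod.mono_neutral_right) auto
    then show ?case
      using elim(1) assms(5) unfolding Inter by (simp add: E_def B_def)
  qed
qed

lemma cond_indep_vars_nn_integral_indicator:
  assumes ci: "cond_indep_vars M F X J" and J: "finite J" "i \<in> J" "j \<in> J" "i \<noteq> j"
    and [measurable]: "X i \<in> borel_measurable M" "X j \<in> borel_measurable M" "A \<in> sets borel" "A' \<in> sets borel"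
  shows "(\<integral>\<^sup>+\<omega>. indicator A (X i \<omega>) * indicator A' (X j \<omega>) \<partial>M)
    = (\<integral>\<^sup>+\<omega>. nn_cond_exp M F (\<lambda>\<omega>. indicator A (X i \<omega>)) \<omega> * nn_cond_exp M F (\<lambda>\<omega>. indicator A' (X j \<omega>)) \<omega> \<partial>M)"
proof -
  define Ei where "Ei = X i -` A \<inter> space M"
  define Ej where "Ej = X j -` A' \<inter> space M"
  have Ei[measurable]: "Ei \<in> sets M" and Ej[measurable]: "Ej \<in> sets M"
    unfolding Ei_def Ej_def by measurable
  have nn: "AE \<omega> in M. ennreal (real_cond_exp M F (indicator E) \<omega>) = nn_cond_exp M F (indicator E) \<omega>"
    if [measurable]: "E \<in> sets M" for E
    using real_cond_exp_eq_nn_cond_exp[of "indicator E"]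
    by (simp add: integrable_indicator_iff less_top[symmetric] ennreal_indicator)
  have cond_i: "AE \<omega> in M. nn_cond_exp M F (indicator Ei) \<omega> = nn_cond_exp M F (\<lambda>\<omega>. indicator A (X i \<omega>)) \<omega>"
    by (rule nn_cond_exp_cong) (auto simp: Ei_def split: split_indicator)
  have cond_j: "AE \<omega> in M. nn_cond_exp M F (indicator Ej) \<omega> = nn_cond_exp M F (\<lambda>\<omega>. indicator A' (X j \<omega>)) \<omega>"
    by (rule nn_cond_exp_cong) (auto simp: Ej_def split: split_indicator)
  have pos: "AE \<omega> in M. 0 \<le> real_cond_exp M F (indicator E) \<omega>" if [measurable]: "E \<in> sets M" for E
    by (rule real_cond_exp_pos) auto
  have prod: "AE \<omega> in M. real_cond_exp M F (indicator (Ei \<inter> Ej)) \<omega>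
      = real_cond_exp M F (indicator Ei) \<omega> * real_cond_exp M F (indicator Ej) \<omega>"
    using cond_indep_vars_real_cond_exp_Int[OF ci J, of A A'] by (simp add: Ei_def Ej_def Int_assoc)
  have "(\<integral>\<^sup>+\<omega>. indicator A (X i \<omega>) * indicator A' (X j \<omega>) \<partial>M) = (\<integral>\<^sup>+\<omega>. 1 * indicator (Ei \<inter> Ej) \<omega> \<partial>M)"
    by (rule nn_integral_cong) (auto simp: Ei_def Ej_def split: split_indicator)
  also have "\<dots> = (\<integral>\<^sup>+\<omega>. 1 * nn_cond_exp M F (indicator (Ei \<inter> Ej)) \<omega> \<partial>M)"
    by (rule nn_cond_exp_intg[symmetric]) auto
  also have "\<dots> = (\<integral>\<^sup>+\<omega>. nn_cond_exp M F (\<lambda>\<omega>. indicator A (X i \<omega>)) \<omega> * nn_cond_exp M F (\<lambda>\<omega>. indicator A' (X j \<omega>)) \<omega> \<partial>M)"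
  proof (rule nn_integral_cong_AE)
    show "AE \<omega> in M. 1 * nn_cond_exp M F (indicator (Ei \<inter> Ej)) \<omega>
      = nn_cond_exp M F (\<lambda>\<omega>. indicator A (X i \<omega>)) \<omega> * nn_cond_exp M F (\<lambda>\<omega>. indicator A' (X j \<omega>)) \<omega>"
      using prod nn[OF sets.Int[OF Ei Ej]] nn[OF Ei] nn[OF Ej] pos[OF Ei] pos[OF Ej] cond_i cond_j
    proof eventually_elim
      case (elim \<omega>)
      show ?case
        using elim(5,6) by (simp add: elim(1) ennreal_mult flip: elim(2,3,4,7,8))
    qed
  qed
  finally show ?thesis .
qed

lemma cond_indep_vars_nn_integral:
  fixes u w :: "'v::topological_space \<Rightarrow> ennreal"
  assumes ci: "cond_indep_vars M F X J" and J: "finite J" "i \<in> J" "j \<in> J" "i \<noteq> j"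
    and [measurable]: "X i \<in> borel_measurable M" "X j \<in> borel_measurable M"
      "u \<in> borel_measurable borel" "w \<in> borel_measurable borel"
  shows "(\<integral>\<^sup>+\<omega>. u (X i \<omega>) * w (X j \<omega>) \<partial>M)
    = (\<integral>\<^sup>+\<omega>. nn_cond_exp M F (\<lambda>\<omega>. u (X i \<omega>)) \<omega> * nn_cond_exp M F (\<lambda>\<omega>. w (X j \<omega>)) \<omega> \<partial>M)"
proof -
  let ?N = "nn_cond_exp M F"
  have cond_left: "(\<integral>\<^sup>+\<omega>. w' (X j \<omega>) * indicator A (X i \<omega>) \<partial>M)
      = (\<integral>\<^sup>+\<omega>. w' (X j \<omega>) * ?N (\<lambda>\<omega>. indicator A (X i \<omega>)) \<omega> \<partial>M)"
    if [measurable]: "A \<in> sets borel" "w' \<in> borel_measurable borel" for A w'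
  proof (rule nn_integral_comp_mult_eqI[where u = w' and Y = "X j"])
    fix A' :: "'v set" assume [measurable]: "A' \<in> sets borel"
    have "(\<integral>\<^sup>+\<omega>. indicator A' (X j \<omega>) * indicator A (X i \<omega>) \<partial>M)
        = (\<integral>\<^sup>+\<omega>. ?N (\<lambda>\<omega>. indicator A (X i \<omega>)) \<omega> * ?N (\<lambda>\<omega>. indicator A' (X j \<omega>)) \<omega> \<partial>M)"
      using cond_indep_vars_nn_integral_indicator[OF ci J, of A A'] by (simp add: mult.commute)
    also have "\<dots> = (\<integral>\<^sup>+\<omega>. ?N (\<lambda>\<omega>. indicator A (X i \<omega>)) \<omega> * indicator A' (X j \<omega>) \<partial>M)"
      by (rule nn_cond_exp_intg) auto
    finally show "(\<integral>\<^sup>+\<omega>. indicator A' (X j \<omega>) * indicator A (X i \<omega>) \<partial>M)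
        = (\<integral>\<^sup>+\<omega>. indicator A' (X j \<omega>) * ?N (\<lambda>\<omega>. indicator A (X i \<omega>)) \<omega> \<partial>M)"
      by (simp add: mult.commute)
  qed auto
  have "(\<integral>\<^sup>+\<omega>. u (X i \<omega>) * w (X j \<omega>) \<partial>M) = (\<integral>\<^sup>+\<omega>. u (X i \<omega>) * ?N (\<lambda>\<omega>. w (X j \<omega>)) \<omega> \<partial>M)"
  proof (rule nn_integral_comp_mult_eqI[where u = u and Y = "X i"])
    fix A :: "'v set" assume [measurable]: "A \<in> sets borel"
    have "(\<integral>\<^sup>+\<omega>. indicator A (X i \<omega>) * w (X j \<omega>) \<partial>M)
        = (\<integral>\<^sup>+\<omega>. ?N (\<lambda>\<omega>. indicator A (X i \<omega>)) \<omega> * w (X j \<omega>) \<partial>M)"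
      using cond_left[of A w] by (simp add: mult.commute)
    also have "\<dots> = (\<integral>\<^sup>+\<omega>. ?N (\<lambda>\<omega>. indicator A (X i \<omega>)) \<omega> * ?N (\<lambda>\<omega>. w (X j \<omega>)) \<omega> \<partial>M)"
      by (rule nn_cond_exp_intg[symmetric]) auto
    also have "\<dots> = (\<integral>\<^sup>+\<omega>. ?N (\<lambda>\<omega>. w (X j \<omega>)) \<omega> * indicator A (X i \<omega>) \<partial>M)"
      by (subst mult.commute, rule nn_cond_exp_intg) auto
    finally show "(\<integral>\<^sup>+\<omega>. indicator A (X i \<omega>) * w (X j \<omega>) \<partial>M)
        = (\<integral>\<^sup>+\<omega>. indicator A (X i \<omega>) * ?N (\<lambda>\<omega>. w (X j \<omega>)) \<omega> \<partial>M)"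
      by (simp add: mult.commute)
  qed auto
  also have "\<dots> = (\<integral>\<^sup>+\<omega>. ?N (\<lambda>\<omega>. w (X j \<omega>)) \<omega> * u (X i \<omega>) \<partial>M)"
    by (simp add: mult.commute)
  also have "\<dots> = (\<integral>\<^sup>+\<omega>. ?N (\<lambda>\<omega>. w (X j \<omega>)) \<omega> * ?N (\<lambda>\<omega>. u (X i \<omega>)) \<omega> \<partial>M)"
    by (rule nn_cond_exp_intg[symmetric]) auto
  also have "\<dots> = (\<integral>\<^sup>+\<omega>. ?N (\<lambda>\<omega>. u (X i \<omega>)) \<omega> * ?N (\<lambda>\<omega>. w (X j \<omega>)) \<omega> \<partial>M)"
    by (simp add: mult.commute)
  finally show ?thesis .
qed

lemma cond_indep_vars_integral_enn2real_mult:
  fixes s r :: "'v::topological_space \<Rightarrow> ennreal"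
  assumes ci: "cond_indep_vars M F X J" and J: "finite J" "i \<in> J" "j \<in> J" "i \<noteq> j"
    and [measurable]: "X i \<in> borel_measurable M" "X j \<in> borel_measurable M"
      "s \<in> borel_measurable borel" "r \<in> borel_measurable borel"
    and finite: "(\<integral>\<^sup>+\<omega>. s (X i \<omega>) * r (X j \<omega>) \<partial>M) < \<infinity>"
  defines "S \<equiv> nn_cond_exp M F (\<lambda>\<omega>. s (X i \<omega>))" and "R \<equiv> nn_cond_exp M F (\<lambda>\<omega>. r (X j \<omega>))"
  shows "integrable M (\<lambda>\<omega>. enn2real (s (X i \<omega>)) * enn2real (r (X j \<omega>)))"
    and "integrable M (\<lambda>\<omega>. enn2real (S \<omega>) * enn2real (R \<omega>))"
    and "(\<integral>\<omega>. enn2real (s (X i \<omega>)) * enn2real (r (X j \<omega>)) \<partial>M) = (\<integral>\<omega>. enn2real (S \<omega>) * enn2real (R \<omega>) \<partial>M)"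
proof -
  have eq: "(\<integral>\<^sup>+\<omega>. s (X i \<omega>) * r (X j \<omega>) \<partial>M) = (\<integral>\<^sup>+\<omega>. S \<omega> * R \<omega> \<partial>M)"
    unfolding S_def R_def by (rule cond_indep_vars_nn_integral[OF ci J]) auto
  have [measurable]: "S \<in> borel_measurable M" "R \<in> borel_measurable M"
    unfolding S_def R_def by auto
  show "integrable M (\<lambda>\<omega>. enn2real (s (X i \<omega>)) * enn2real (r (X j \<omega>)))"
    using finite by (intro integrable_enn2real_mult) auto
  show "integrable M (\<lambda>\<omega>. enn2real (S \<omega>) * enn2real (R \<omega>))"
    using finite eq by (intro integrable_enn2real_mult) auto
  show "(\<integral>\<omega>. enn2real (s (X i \<omega>)) * enn2real (r (X j \<omega>)) \<partial>M) = (\<integral>\<omega>. enn2real (S \<omega>) * enn2real (R \<omega>) \<partial>M)"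
    using finite eq by (simp add: integral_enn2real_mult)
qed

text \<open>Split into positive and negative parts, as in the definition of real_cond_exp, and
  apply the nonnegative case to each of the four products.\<close>

lemma cond_indep_vars_integral_mult:
  fixes \<phi> \<psi> :: "'v::topological_space \<Rightarrow> real"
  assumes ci: "cond_indep_vars M F X J" and J: "finite J" "i \<in> J" "j \<in> J" "i \<noteq> j"
    and [measurable]: "X i \<in> borel_measurable M" "X j \<in> borel_measurable M"
      "\<phi> \<in> borel_measurable borel" "\<psi> \<in> borel_measurable borel"
    and int: "integrable M (\<lambda>\<omega>. \<phi> (X i \<omega>) * \<psi> (X j \<omega>))"
  shows "(\<integral>\<omega>. \<phi> (X i \<omega>) * \<psi> (X j \<omega>) \<partial>M)
    = (\<integral>\<omega>. real_cond_exp M F (\<lambda>\<omega>. \<phi> (X i \<omega>)) \<omega> * real_cond_exp M F (\<lambda>\<omega>. \<psi> (X j \<omega>)) \<omega> \<partial>M)"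
proof -
  let ?N = "nn_cond_exp M F"
  define P where "P a b \<omega> = enn2real (ennreal (a * \<phi> (X i \<omega>))) * enn2real (ennreal (b * \<psi> (X j \<omega>)))"
    for a b :: real and \<omega>
  define Q where "Q a b \<omega> = enn2real (?N (\<lambda>\<omega>. ennreal (a * \<phi> (X i \<omega>))) \<omega>)
      * enn2real (?N (\<lambda>\<omega>. ennreal (b * \<psi> (X j \<omega>))) \<omega>)" for a b :: real and \<omega>
  have PQ: "integrable M (P a b) \<and> integrable M (Q a b) \<and> integral\<^sup>L M (P a b) = integral\<^sup>L M (Q a b)"
    if "\<bar>a\<bar> = 1" "\<bar>b\<bar> = 1" for a b
  proof -
    have "(\<integral>\<^sup>+\<omega>. ennreal (a * \<phi> (X i \<omega>)) * ennreal (b * \<psi> (X j \<omega>)) \<partial>M)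
        \<le> (\<integral>\<^sup>+\<omega>. ennreal \<bar>\<phi> (X i \<omega>) * \<psi> (X j \<omega>)\<bar> \<partial>M)"
      using that by (intro nn_integral_mono order_trans[OF ennreal_mult_le_abs_mult]) (simp add: abs_mult)
    also have "\<dots> < \<infinity>" using int by (simp add: integrable_iff_bounded)
    finally show ?thesis
      using cond_indep_vars_integral_enn2real_mult[OF ci J,
          of "\<lambda>z. ennreal (a * \<phi> z)" "\<lambda>z. ennreal (b * \<psi> z)"]
      unfolding P_def Q_def by auto
  qed
  have "(\<lambda>\<omega>. \<phi> (X i \<omega>) * \<psi> (X j \<omega>)) = (\<lambda>\<omega>. P 1 1 \<omega> - P 1 (-1) \<omega> - P (-1) 1 \<omega> + P (-1) (-1) \<omega>)"
  proof
    fix \<omega>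
    have "\<phi> z = enn2real (ennreal (1 * \<phi> z)) - enn2real (ennreal (-1 * \<phi> z))" for z
      by (cases "\<phi> z \<ge> 0") (auto simp: ennreal_neg)
    moreover have "\<psi> z = enn2real (ennreal (1 * \<psi> z)) - enn2real (ennreal (-1 * \<psi> z))" for z
      by (cases "\<psi> z \<ge> 0") (auto simp: ennreal_neg)
    ultimately show "\<phi> (X i \<omega>) * \<psi> (X j \<omega>) = P 1 1 \<omega> - P 1 (-1) \<omega> - P (-1) 1 \<omega> + P (-1) (-1) \<omega>"
      unfolding P_def by (metis (no_types, lifting) left_diff_distrib right_diff_distrib diff_diff_eq2 diff_add_eq)
  qed
  moreover have "(\<lambda>\<omega>. real_cond_exp M F (\<lambda>\<omega>. \<phi> (X i \<omega>)) \<omega> * real_cond_exp M F (\<lambda>\<omega>. \<psi> (X j \<omega>)) \<omega>)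
      = (\<lambda>\<omega>. Q 1 1 \<omega> - Q 1 (-1) \<omega> - Q (-1) 1 \<omega> + Q (-1) (-1) \<omega>)"
    unfolding Q_def real_cond_exp_def by (simp add: algebra_simps)
  ultimately show ?thesis
    using PQ[of 1 1] PQ[of 1 "-1"] PQ[of "-1" 1] PQ[of "-1" "-1"] by simp
qed

end

section \<open>Parallel SGD with a general step size\<close>

locale parallel_sgd =
  fixes M :: "'a measure"
    and F :: "nat \<Rightarrow> 'a measure"
    and f :: "'v::euclidean_space \<Rightarrow> real"
    and grad :: "'v \<Rightarrow> 'v"
    and L B \<sigma> \<alpha> :: real
    and p :: nat
    and I :: "nat \<Rightarrow> nat set"
    and x :: "nat \<Rightarrow> 'a \<Rightarrow> 'v"
    and v G :: "nat \<Rightarrow> nat \<Rightarrow> 'a \<Rightarrow> 'v"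
    and x0 :: 'v
  assumes prob: "prob_space M"
    and filt_sub: "\<And>t. subalgebra M (F t)"
    and grad_f: "\<And>y. (f has_derivative (\<lambda>h. grad y \<bullet> h)) (at y)"
    and L_nonneg: "L \<ge> 0"
    and lipschitz: "\<And>y z. norm (grad y - grad z) \<le> L * norm (y - z)"
    and bdd: "bdd_below (range f)"
    and p_pos: "p \<ge> 1"
    and I_sub: "\<And>t. I t \<subseteq> {1..p}"
    and I_card: "\<And>t. real p / 2 \<le> real (card (I t))"
    and x_0: "\<And>\<omega>. x 0 \<omega> = x0"
    and x_meas: "\<And>t. x t \<in> borel_measurable (F t)"
    and v_meas: "\<And>t i. i \<in> I t \<Longrightarrow> v t i \<in> borel_measurable (F t)"
    and G_meas: "\<And>t i. i \<in> I t \<Longrightarrow> G t i \<in> borel_measurable (F (Suc t))"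
    and G_indep: "\<And>t. cond_indep_vars M (F t) (G t) (I t)"
    and G_unbiased: "\<And>t i b. i \<in> I t \<Longrightarrow> b \<in> Basis \<Longrightarrow>
        AE \<omega> in M. real_cond_exp M (F t) (\<lambda>\<omega>. G t i \<omega> \<bullet> b) \<omega> = grad (v t i \<omega>) \<bullet> b"
    and G_var: "\<And>t i. i \<in> I t \<Longrightarrow>
        AE \<omega> in M. nn_cond_exp M (F t) (\<lambda>\<omega>. ennreal ((norm (G t i \<omega> - grad (v t i \<omega>)))\<^sup>2)) \<omega>
          \<le> ennreal (\<sigma>\<^sup>2)"
    and alpha_pos: "\<alpha> > 0"
    and alpha_small: "L * \<alpha> \<le> 1/2"
    and update: "\<And>t \<omega>. \<omega> \<in> space M \<Longrightarrow>
        x (Suc t) \<omega> = x t \<omega> - (\<alpha> / real p) *\<^sub>R (\<Sum>i\<in>I t. G t i \<omega>)"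
    and elastic: "\<And>t i. i \<in> I t \<Longrightarrow>
        (\<integral>\<^sup>+ \<omega>. ennreal ((norm (x t \<omega> - v t i \<omega>))\<^sup>2) \<partial>M) \<le> ennreal (\<alpha>\<^sup>2 * B\<^sup>2)"
begin

sublocale prob_space M by (rule prob)

lemma finite_measure_subalgebra_F: "finite_measure_subalgebra M (F t)"
  by (intro finite_measure_subalgebra.intro finite_measure_subalgebra_axioms.intro
      finite_measure_axioms filt_sub)

lemma measurable_F_imp_measurable: "h \<in> borel_measurable (F t) \<Longrightarrow> h \<in> borel_measurable M"
  using measurable_from_subalg[OF filt_sub] by blast

lemma x_measurable[measurable]: "x t \<in> borel_measurable M"
  by (rule measurable_F_imp_measurable[OF x_meas])

lemma v_measurable: "i \<in> I t \<Longrightarrow> v t i \<in> borel_measurable M"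
  by (rule measurable_F_imp_measurable[OF v_meas])

lemma G_measurable: "i \<in> I t \<Longrightarrow> G t i \<in> borel_measurable M"
  by (rule measurable_F_imp_measurable[OF G_meas])

lemma grad_measurable[measurable]: "grad \<in> borel_measurable borel"
proof -
  have "L-lipschitz_on UNIV grad"
    using lipschitz L_nonneg by (auto simp: lipschitz_on_def dist_norm)
  then show ?thesis by (intro borel_measurable_continuous_onI lipschitz_on_continuous_on)
qed

lemma finite_I: "finite (I t)"
  using I_sub by (rule finite_subset) simp

lemma card_I_le: "real (card (I t)) \<le> real p"
  using card_mono[OF _ I_sub] by simp

lemma noise_nn_integral_le:
  assumes i: "i \<in> I t"
  shows "(\<integral>\<^sup>+ \<omega>. ennreal ((norm (G t i \<omega> - grad (v t i \<omega>)))\<^sup>2) \<partial>M) \<le> ennreal (\<sigma>\<^sup>2)"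
proof -
  interpret finite_measure_subalgebra M "F t" by (rule finite_measure_subalgebra_F)
  have [measurable]: "G t i \<in> borel_measurable M" "v t i \<in> borel_measurable M"
    using G_measurable[OF i] v_measurable[OF i] by auto
  have "(\<integral>\<^sup>+ \<omega>. ennreal ((norm (G t i \<omega> - grad (v t i \<omega>)))\<^sup>2) \<partial>M)
      = (\<integral>\<^sup>+ \<omega>. 1 * nn_cond_exp M (F t) (\<lambda>\<omega>. ennreal ((norm (G t i \<omega> - grad (v t i \<omega>)))\<^sup>2)) \<omega> \<partial>M)"
    by (subst nn_cond_exp_intg) auto
  also have "\<dots> \<le> (\<integral>\<^sup>+ \<omega>. ennreal (\<sigma>\<^sup>2) \<partial>M)"
    using G_var[OF i] by (intro nn_integral_mono_AE) auto
  finally show ?thesis by (simp add: emeasure_space_1)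
qed

lemma square_integrable_step:
  assumes x: "square_integrable M (x t)" and i: "i \<in> I t"
  shows "square_integrable M (v t i)" and "square_integrable M (\<lambda>\<omega>. grad (v t i \<omega>))"
    and "square_integrable M (G t i)"
proof -
  have [measurable]: "v t i \<in> borel_measurable M" "G t i \<in> borel_measurable M"
    using v_measurable[OF i] G_measurable[OF i] by auto
  have "square_integrable M (\<lambda>\<omega>. x t \<omega> - v t i \<omega>)"
    using elastic[OF i] by (intro square_integrableI_nn_integral) (auto simp: le_less_trans)
  from square_integrable_diff[OF x this]
  show v: "square_integrable M (v t i)" by simp
  show gv: "square_integrable M (\<lambda>\<omega>. grad (v t i \<omega>))"
    by (rule square_integrable_lipschitz_comp[OF v lipschitz L_nonneg])
  have "square_integrable M (\<lambda>\<omega>. G t i \<omega> - grad (v t i \<omega>))"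
    using noise_nn_integral_le[OF i] by (intro square_integrableI_nn_integral) (auto simp: le_less_trans)
  from square_integrable_add[OF this gv]
  show "square_integrable M (G t i)" by simp
qed

lemma square_integrable_x: "square_integrable M (x t)"
proof (induction t)
  case 0
  show ?case using x_0 square_integrable_const[of x0] by (simp add: fun_eq_iff)
next
  case (Suc t)
  have "square_integrable M (\<lambda>\<omega>. x t \<omega> - (\<alpha> / real p) *\<^sub>R (\<Sum>i\<in>I t. G t i \<omega>))"
    using Suc square_integrable_step(3)
    by (intro square_integrable_diff square_integrable_scaleR square_integrable_sum) auto
  then show ?case by (rule square_integrable_cong[rotated 2]) (simp_all add: update)
qed

lemma square_integrable_v: "i \<in> I t \<Longrightarrow> square_integrable M (v t i)"
  and square_integrable_grad_v: "i \<in> I t \<Longrightarrow> square_integrable M (\<lambda>\<omega>. grad (v t i \<omega>))"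
  and square_integrable_G: "i \<in> I t \<Longrightarrow> square_integrable M (G t i)"
  using square_integrable_step[OF square_integrable_x] by auto

lemma square_integrable_grad_x: "square_integrable M (\<lambda>\<omega>. grad (x t \<omega>))"
  by (rule square_integrable_lipschitz_comp[OF square_integrable_x lipschitz L_nonneg])

lemma integrable_f_x: "integrable M (\<lambda>\<omega>. f (x t \<omega>))"
  by (rule integrable_lipschitz_gradient_comp[OF square_integrable_x grad_f lipschitz L_nonneg])

lemma integral_inner_G:
  assumes i: "i \<in> I t" and H: "H \<in> borel_measurable (F t)" "square_integrable M H"
  shows "(\<integral>\<omega>. H \<omega> \<bullet> G t i \<omega> \<partial>M) = (\<integral>\<omega>. H \<omega> \<bullet> grad (v t i \<omega>) \<partial>M)"
proof -
  interpret finite_measure_subalgebra M "F t" by (rule finite_measure_subalgebra_F)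
  have [measurable]: "G t i \<in> borel_measurable M" "v t i \<in> borel_measurable M"
    "H \<in> borel_measurable (F t)" "H \<in> borel_measurable M"
    using G_measurable[OF i] v_measurable[OF i] H measurable_F_imp_measurable[OF H(1)] by auto
  have "(\<integral>\<omega>. (H \<omega> \<bullet> b) * (G t i \<omega> \<bullet> b) \<partial>M) = (\<integral>\<omega>. (H \<omega> \<bullet> b) * (grad (v t i \<omega>) \<bullet> b) \<partial>M)"
    if b: "b \<in> Basis" for b
  proof -
    have "(\<integral>\<omega>. (H \<omega> \<bullet> b) * (G t i \<omega> \<bullet> b) \<partial>M)
        = (\<integral>\<omega>. (H \<omega> \<bullet> b) * real_cond_exp M (F t) (\<lambda>\<omega>. G t i \<omega> \<bullet> b) \<omega> \<partial>M)"
      using integrable_inner_Basis_mult[OF H(2) square_integrable_G[OF i] b b]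
      by (intro real_cond_exp_intg(2)[symmetric]) auto
    also have "\<dots> = (\<integral>\<omega>. (H \<omega> \<bullet> b) * (grad (v t i \<omega>) \<bullet> b) \<partial>M)"
      using G_unbiased[OF i b] by (intro integral_cong_AE) auto
    finally show ?thesis .
  qed
  then show ?thesis
    by (simp add: integral_inner_eq_sum_Basis H(2) square_integrable_G[OF i] square_integrable_grad_v[OF i])
qed

lemma integral_inner_G_G:
  assumes i: "i \<in> I t" and j: "j \<in> I t" and "i \<noteq> j"
  shows "(\<integral>\<omega>. G t i \<omega> \<bullet> G t j \<omega> \<partial>M) = (\<integral>\<omega>. grad (v t i \<omega>) \<bullet> grad (v t j \<omega>) \<partial>M)"
proof -
  interpret finite_measure_subalgebra M "F t" by (rule finite_measure_subalgebra_F)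
  have [measurable]: "G t i \<in> borel_measurable M" "G t j \<in> borel_measurable M"
    "v t i \<in> borel_measurable M" "v t j \<in> borel_measurable M"
    using G_measurable v_measurable i j by auto
  have "(\<integral>\<omega>. (G t i \<omega> \<bullet> b) * (G t j \<omega> \<bullet> b) \<partial>M)
      = (\<integral>\<omega>. (grad (v t i \<omega>) \<bullet> b) * (grad (v t j \<omega>) \<bullet> b) \<partial>M)"
    if b: "b \<in> Basis" for b
  proof -
    have "(\<integral>\<omega>. (G t i \<omega> \<bullet> b) * (G t j \<omega> \<bullet> b) \<partial>M)
      = (\<integral>\<omega>. real_cond_exp M (F t) (\<lambda>\<omega>. G t i \<omega> \<bullet> b) \<omega> * real_cond_exp M (F t) (\<lambda>\<omega>. G t j \<omega> \<bullet> b) \<omega> \<partial>M)"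
      using integrable_inner_Basis_mult[OF square_integrable_G[OF i] square_integrable_G[OF j] b b]
      by (intro cond_indep_vars_integral_mult[OF G_indep finite_I i j \<open>i \<noteq> j\<close>]) auto
    also have "\<dots> = (\<integral>\<omega>. (grad (v t i \<omega>) \<bullet> b) * (grad (v t j \<omega>) \<bullet> b) \<partial>M)"
      using G_unbiased[OF i b] G_unbiased[OF j b] by (intro integral_cong_AE) auto
    finally show ?thesis .
  qed
  then show ?thesis
    by (simp add: integral_inner_eq_sum_Basis square_integrable_G i j square_integrable_grad_v)
qed

lemma integral_inner_G_self_le:
  assumes i: "i \<in> I t"
  shows "(\<integral>\<omega>. G t i \<omega> \<bullet> G t i \<omega> \<partial>M) \<le> (\<integral>\<omega>. grad (v t i \<omega>) \<bullet> grad (v t i \<omega>) \<partial>M) + \<sigma>\<^sup>2"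
proof -
  define \<xi> where "\<xi> = (\<lambda>\<omega>. G t i \<omega> - grad (v t i \<omega>))"
  note sG = square_integrable_G[OF i] and sgv = square_integrable_grad_v[OF i]
  have s\<xi>: "square_integrable M \<xi>" unfolding \<xi>_def by (rule square_integrable_diff[OF sG sgv])
  have "G t i \<omega> \<bullet> G t i \<omega> = \<xi> \<omega> \<bullet> \<xi> \<omega> + 2 * (grad (v t i \<omega>) \<bullet> G t i \<omega>) - grad (v t i \<omega>) \<bullet> grad (v t i \<omega>)" for \<omega>
    unfolding \<xi>_def by (simp add: inner_diff_left inner_diff_right inner_commute)
  then have "(\<integral>\<omega>. G t i \<omega> \<bullet> G t i \<omega> \<partial>M)
      = (\<integral>\<omega>. \<xi> \<omega> \<bullet> \<xi> \<omega> \<partial>M) + 2 * (\<integral>\<omega>. grad (v t i \<omega>) \<bullet> G t i \<omega> \<partial>M) - (\<integral>\<omega>. grad (v t i \<omega>) \<bullet> grad (v t i \<omega>) \<partial>M)"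
    using integrable_inner[OF s\<xi> s\<xi>] integrable_inner[OF sgv sG] integrable_inner[OF sgv sgv] by simp
  also have "(\<integral>\<omega>. grad (v t i \<omega>) \<bullet> G t i \<omega> \<partial>M) = (\<integral>\<omega>. grad (v t i \<omega>) \<bullet> grad (v t i \<omega>) \<partial>M)"
    using measurable_compose[OF v_meas[OF i] grad_measurable]
    by (intro integral_inner_G[OF i _ sgv]) (simp add: comp_def)
  also have "(\<integral>\<omega>. \<xi> \<omega> \<bullet> \<xi> \<omega> \<partial>M) \<le> \<sigma>\<^sup>2"
    using noise_nn_integral_le[OF i] integral_eq_nn_integral_power2_norm[OF s\<xi>]
    by (simp add: \<xi>_def power2_norm_eq_inner)
  finally show ?thesis by simp
qed

lemma integral_norm_sum_G_le:
  "(\<integral>\<omega>. (norm (\<Sum>i\<in>I t. G t i \<omega>))\<^sup>2 \<partial>M)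
    \<le> real (card (I t)) * \<sigma>\<^sup>2 + (\<integral>\<omega>. (norm (\<Sum>i\<in>I t. grad (v t i \<omega>)))\<^sup>2 \<partial>M)"
proof -
  have expand: "(\<integral>\<omega>. (norm (\<Sum>i\<in>I t. h i \<omega>))\<^sup>2 \<partial>M) = (\<Sum>i\<in>I t. \<Sum>j\<in>I t. \<integral>\<omega>. h i \<omega> \<bullet> h j \<omega> \<partial>M)"
    if "\<And>i. i \<in> I t \<Longrightarrow> square_integrable M (h i)" for h :: "nat \<Rightarrow> 'a \<Rightarrow> 'v"
    using integrable_inner[OF that that]
    by (simp add: power2_norm_sum_eq_sum_inner Bochner_Integration.integral_sum integrable_sum)
  have row: "(\<Sum>j\<in>I t. \<integral>\<omega>. G t i \<omega> \<bullet> G t j \<omega> \<partial>M)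
      \<le> (\<Sum>j\<in>I t. \<integral>\<omega>. grad (v t i \<omega>) \<bullet> grad (v t j \<omega>) \<partial>M) + \<sigma>\<^sup>2" if i: "i \<in> I t" for i
    using integral_inner_G_self_le[OF i] integral_inner_G_G[OF i]
    by (simp add: sum.remove[OF finite_I i])
  have "(\<integral>\<omega>. (norm (\<Sum>i\<in>I t. G t i \<omega>))\<^sup>2 \<partial>M) = (\<Sum>i\<in>I t. \<Sum>j\<in>I t. \<integral>\<omega>. G t i \<omega> \<bullet> G t j \<omega> \<partial>M)"
    by (rule expand) (rule square_integrable_G)
  also have "\<dots> \<le> (\<Sum>i\<in>I t. (\<Sum>j\<in>I t. \<integral>\<omega>. grad (v t i \<omega>) \<bullet> grad (v t j \<omega>) \<partial>M) + \<sigma>\<^sup>2)"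
    by (rule sum_mono) (rule row)
  also have "\<dots> = (\<integral>\<omega>. (norm (\<Sum>i\<in>I t. grad (v t i \<omega>)))\<^sup>2 \<partial>M) + real (card (I t)) * \<sigma>\<^sup>2"
    by (simp add: sum.distrib expand square_integrable_grad_v)
  finally show ?thesis by simp
qed

lemma integral_view_error_le:
  "i \<in> I t \<Longrightarrow> (\<integral>\<omega>. (norm (x t \<omega> - v t i \<omega>))\<^sup>2 \<partial>M) \<le> \<alpha>\<^sup>2 * B\<^sup>2"
  using elastic[of i t] integral_eq_nn_integral_power2_norm[OF
      square_integrable_diff[OF square_integrable_x square_integrable_v]]
  by simp

lemma descent_step_pointwise:
  assumes "\<omega> \<in> space M"
  shows "f (x (Suc t) \<omega>) \<le> f (x t \<omega>) - (\<alpha> / real p) * (grad (x t \<omega>) \<bullet> (\<Sum>i\<in>I t. G t i \<omega>))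
    + L * (\<alpha> / real p)\<^sup>2 * (norm (\<Sum>i\<in>I t. G t i \<omega>))\<^sup>2"
proof -
  let ?S = "\<Sum>i\<in>I t. G t i \<omega>"
  have step: "x (Suc t) \<omega> - x t \<omega> = - ((\<alpha> / real p) *\<^sub>R ?S)"
    using update[OF assms] by simp
  have "f (x (Suc t) \<omega>) \<le> f (x t \<omega>) + grad (x t \<omega>) \<bullet> (x (Suc t) \<omega> - x t \<omega>)
      + L * (norm (x (Suc t) \<omega> - x t \<omega>))\<^sup>2"
    using lipschitz_gradient_taylor_bound[OF grad_f lipschitz L_nonneg, of "x (Suc t) \<omega>" "x t \<omega>"]
    by (simp add: abs_le_iff)
  also have "\<dots> = f (x t \<omega>) - (\<alpha> / real p) * (grad (x t \<omega>) \<bullet> ?S) + L * (\<alpha> / real p)\<^sup>2 * (norm ?S)\<^sup>2"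
    unfolding step by (simp add: power_mult_distrib power_divide)
  finally show ?thesis .
qed

lemma integral_inner_grad_x_sum_G:
  "(\<integral>\<omega>. grad (x t \<omega>) \<bullet> (\<Sum>i\<in>I t. G t i \<omega>) \<partial>M)
    = (\<integral>\<omega>. grad (x t \<omega>) \<bullet> (\<Sum>i\<in>I t. grad (v t i \<omega>)) \<partial>M)"
proof -
  have gF: "(\<lambda>\<omega>. grad (x t \<omega>)) \<in> borel_measurable (F t)"
    using measurable_compose[OF x_meas grad_measurable] by (simp add: comp_def)
  note sg = square_integrable_grad_x[of t]
  show ?thesis
    using integrable_inner[OF sg square_integrable_G] integrable_inner[OF sg square_integrable_grad_v]
      integral_inner_G[OF _ gF sg]
    by (simp add: inner_sum_right Bochner_Integration.integral_sum)
qed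

lemma integral_descent_direction_le:
  assumes "a \<ge> 0" "L * a * real (card (I t)) \<le> 1/2"
  shows "- a * (\<integral>\<omega>. grad (x t \<omega>) \<bullet> (\<Sum>i\<in>I t. grad (v t i \<omega>)) \<partial>M)
      + L * a\<^sup>2 * (\<integral>\<omega>. (norm (\<Sum>i\<in>I t. grad (v t i \<omega>)))\<^sup>2 \<partial>M)
    \<le> - (a * real (card (I t)) / 2) * (\<integral>\<omega>. (norm (grad (x t \<omega>)))\<^sup>2 \<partial>M)
      + (a / 2) * (real (card (I t)) * (L\<^sup>2 * (\<alpha>\<^sup>2 * B\<^sup>2)))"
proof -
  let ?n = "real (card (I t))"
  let ?e = "\<lambda>\<omega> i. L\<^sup>2 * (norm (x t \<omega> - v t i \<omega>))\<^sup>2"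
  note sg = square_integrable_grad_x[of t]
  have sgv: "square_integrable M (\<lambda>\<omega>. \<Sum>i\<in>I t. grad (v t i \<omega>))"
    by (intro square_integrable_sum square_integrable_grad_v)
  have int_e: "integrable M (\<lambda>\<omega>. ?e \<omega> i)" if "i \<in> I t" for i
    using square_integrableD(2)[OF square_integrable_diff[OF square_integrable_x square_integrable_v[OF that]]]
    by simp
  have "(norm (grad (x t \<omega>) - grad (v t i \<omega>)))\<^sup>2 \<le> ?e \<omega> i" for \<omega> i
    using lipschitz[of "x t \<omega>" "v t i \<omega>"] by (simp add: power_mono flip: power_mult_distrib)
  then have "- a * (grad (x t \<omega>) \<bullet> (\<Sum>i\<in>I t. grad (v t i \<omega>)))
        + L * a\<^sup>2 * (norm (\<Sum>i\<in>I t. grad (v t i \<omega>)))\<^sup>2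
      \<le> - (a * ?n / 2) * (norm (grad (x t \<omega>)))\<^sup>2 + (a / 2) * (\<Sum>i\<in>I t. ?e \<omega> i)" for \<omega>
    unfolding inner_sum_right by (rule inner_sum_norm_sum_descent_le[OF assms(1) L_nonneg assms(2)])
  then have "(\<integral>\<omega>. - a * (grad (x t \<omega>) \<bullet> (\<Sum>i\<in>I t. grad (v t i \<omega>)))
        + L * a\<^sup>2 * (norm (\<Sum>i\<in>I t. grad (v t i \<omega>)))\<^sup>2 \<partial>M)
      \<le> (\<integral>\<omega>. - (a * ?n / 2) * (norm (grad (x t \<omega>)))\<^sup>2 + (a / 2) * (\<Sum>i\<in>I t. ?e \<omega> i) \<partial>M)"
    using integrable_inner[OF sg sgv] square_integrableD(2)[OF sgv] square_integrableD(2)[OF sg] int_e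
    by (intro integral_mono) auto
  then have integrated: "- a * (\<integral>\<omega>. grad (x t \<omega>) \<bullet> (\<Sum>i\<in>I t. grad (v t i \<omega>)) \<partial>M)
      + L * a\<^sup>2 * (\<integral>\<omega>. (norm (\<Sum>i\<in>I t. grad (v t i \<omega>)))\<^sup>2 \<partial>M)
    \<le> - (a * ?n / 2) * (\<integral>\<omega>. (norm (grad (x t \<omega>)))\<^sup>2 \<partial>M) + (a / 2) * (\<integral>\<omega>. (\<Sum>i\<in>I t. ?e \<omega> i) \<partial>M)"
    using integrable_inner[OF sg sgv] square_integrableD(2)[OF sgv] square_integrableD(2)[OF sg] int_e
    by simp
  have "(\<integral>\<omega>. (\<Sum>i\<in>I t. ?e \<omega> i) \<partial>M) = (\<Sum>i\<in>I t. \<integral>\<omega>. ?e \<omega> i \<partial>M)"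
    by (rule Bochner_Integration.integral_sum) (rule int_e)
  also have "\<dots> \<le> (\<Sum>i\<in>I t. L\<^sup>2 * (\<alpha>\<^sup>2 * B\<^sup>2))"
    by (rule sum_mono) (simp add: mult_left_mono integral_view_error_le)
  finally have "(\<integral>\<omega>. (\<Sum>i\<in>I t. ?e \<omega> i) \<partial>M) \<le> ?n * (L\<^sup>2 * (\<alpha>\<^sup>2 * B\<^sup>2))" by simp
  from mult_left_mono[OF this, of "a / 2"] integrated assms(1) show ?thesis by simp
qed

lemma step_size_card_bounds:
  shows "\<alpha> / 2 \<le> \<alpha> / real p * real (card (I t))" and "\<alpha> / real p * real (card (I t)) \<le> \<alpha>"
proof -
  have p: "real p > 0" using p_pos by simp
  show "\<alpha> / 2 \<le> \<alpha> / real p * real (card (I t))"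
    using mult_left_mono[OF I_card[of t], of "\<alpha> / real p"] alpha_pos p by simp
  show "\<alpha> / real p * real (card (I t)) \<le> \<alpha>"
    using mult_left_mono[OF card_I_le[of t], of "\<alpha> / real p"] alpha_pos p by simp
qed

lemma expected_descent_step:
  "(\<integral>\<omega>. f (x (Suc t) \<omega>) \<partial>M) \<le> (\<integral>\<omega>. f (x t \<omega>) \<partial>M) - (\<alpha> / 4) * (\<integral>\<omega>. (norm (grad (x t \<omega>)))\<^sup>2 \<partial>M)
     + \<alpha>^3 * L\<^sup>2 * B\<^sup>2 / 2 + L * \<alpha>\<^sup>2 * \<sigma>\<^sup>2 / real p"
proof -
  define a where "a = \<alpha> / real p"
  define n where "n = real (card (I t))"
  let ?g = "\<lambda>\<omega>. grad (x t \<omega>)" and ?SG = "\<lambda>\<omega>. \<Sum>i\<in>I t. G t i \<omega>"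
  let ?E = "\<integral>\<omega>. (norm (grad (x t \<omega>)))\<^sup>2 \<partial>M"
  have a: "a \<ge> 0" using alpha_pos by (simp add: a_def)
  have an: "\<alpha> / 2 \<le> a * n" "a * n \<le> \<alpha>"
    using step_size_card_bounds unfolding a_def n_def by auto
  have Lan: "L * a * n \<le> 1/2"
    using mult_left_mono[OF an(2) L_nonneg] alpha_small by (simp add: mult.assoc)
  have sSG: "square_integrable M ?SG"
    by (intro square_integrable_sum square_integrable_G)
  have "(\<integral>\<omega>. f (x (Suc t) \<omega>) \<partial>M)
      \<le> (\<integral>\<omega>. f (x t \<omega>) - a * (?g \<omega> \<bullet> ?SG \<omega>) + L * a\<^sup>2 * (norm (?SG \<omega>))\<^sup>2 \<partial>M)"
    using descent_step_pointwise integrable_f_x integrable_inner[OF square_integrable_grad_x sSG]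
      square_integrableD(2)[OF sSG]
    by (intro integral_mono) (auto simp: a_def)
  also have "\<dots> = (\<integral>\<omega>. f (x t \<omega>) \<partial>M) - a * (\<integral>\<omega>. ?g \<omega> \<bullet> (\<Sum>i\<in>I t. grad (v t i \<omega>)) \<partial>M)
      + L * a\<^sup>2 * (\<integral>\<omega>. (norm (?SG \<omega>))\<^sup>2 \<partial>M)"
    using integrable_f_x integrable_inner[OF square_integrable_grad_x sSG] square_integrableD(2)[OF sSG]
    by (simp add: integral_inner_grad_x_sum_G)
  also have "\<dots> \<le> (\<integral>\<omega>. f (x t \<omega>) \<partial>M) - a * (\<integral>\<omega>. ?g \<omega> \<bullet> (\<Sum>i\<in>I t. grad (v t i \<omega>)) \<partial>M)
      + L * a\<^sup>2 * (n * \<sigma>\<^sup>2 + (\<integral>\<omega>. (norm (\<Sum>i\<in>I t. grad (v t i \<omega>)))\<^sup>2 \<partial>M))"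
    using mult_left_mono[OF integral_norm_sum_G_le[of t], of "L * a\<^sup>2"] L_nonneg
    by (simp add: n_def)
  also have "\<dots> \<le> (\<integral>\<omega>. f (x t \<omega>) \<partial>M) - (a * n / 2) * ?E + (a * n) * L\<^sup>2 * \<alpha>\<^sup>2 * B\<^sup>2 / 2
      + L * a * (a * n) * \<sigma>\<^sup>2"
    using integral_descent_direction_le[OF a Lan[unfolded n_def]]
    by (simp add: n_def power2_eq_square algebra_simps)
  also have "\<dots> \<le> (\<integral>\<omega>. f (x t \<omega>) \<partial>M) - (\<alpha> / 4) * ?E + \<alpha> * L\<^sup>2 * \<alpha>\<^sup>2 * B\<^sup>2 / 2
      + L * a * \<alpha> * \<sigma>\<^sup>2"
  proof -
    have "(\<alpha> / 4) * ?E \<le> (a * n / 2) * ?E"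
      using an(1) by (intro mult_right_mono) auto
    moreover have "(a * n) * (L\<^sup>2 * \<alpha>\<^sup>2 * B\<^sup>2) \<le> \<alpha> * (L\<^sup>2 * \<alpha>\<^sup>2 * B\<^sup>2)"
      using an(2) by (intro mult_right_mono) auto
    moreover have "(L * a) * (a * n) * \<sigma>\<^sup>2 \<le> (L * a) * \<alpha> * \<sigma>\<^sup>2"
      using an(2) a L_nonneg by (intro mult_right_mono mult_left_mono) auto
    ultimately show ?thesis by (simp add: algebra_simps)
  qed
  also have "\<dots> = (\<integral>\<omega>. f (x t \<omega>) \<partial>M) - (\<alpha> / 4) * ?E + \<alpha>^3 * L\<^sup>2 * B\<^sup>2 / 2 + L * \<alpha>\<^sup>2 * \<sigma>\<^sup>2 / real p"
    by (simp add: a_def power2_eq_square power3_eq_cube ac_simps)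
  finally show ?thesis .
qed

lemma telescoped_descent:
  "(\<alpha> / 4) * (\<Sum>t<n. \<integral>\<omega>. (norm (grad (x t \<omega>)))\<^sup>2 \<partial>M)
    \<le> f x0 - (\<integral>\<omega>. f (x n \<omega>) \<partial>M) + real n * (\<alpha>^3 * L\<^sup>2 * B\<^sup>2 / 2 + L * \<alpha>\<^sup>2 * \<sigma>\<^sup>2 / real p)"
proof (induction n)
  case 0
  show ?case using x_0 by (simp add: prob_space)
next
  case (Suc n)
  show ?case
    using Suc.IH expected_descent_step[of n]
    unfolding sum.lessThan_Suc of_nat_Suc distrib_left distrib_right by linarith
qed

lemma min_expected_grad_norm_le:
  assumes "T > 0"
  shows "(MIN t\<in>{0..<T}. \<integral>\<^sup>+ \<omega>. ennreal ((norm (grad (x t \<omega>)))\<^sup>2) \<partial>M)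
    \<le> ennreal (4 * (f x0 - Inf (range f)) / (\<alpha> * real T) + 2 * \<alpha>\<^sup>2 * L\<^sup>2 * B\<^sup>2 + 4 * L * \<alpha> * \<sigma>\<^sup>2 / real p)"
proof -
  define E where "E t = (\<integral>\<omega>. (norm (grad (x t \<omega>)))\<^sup>2 \<partial>M)" for t
  have "Min (E ` {0..<T}) \<in> E ` {0..<T}"
    using assms by (intro Min_in) auto
  then obtain t0 where t0: "t0 \<in> {0..<T}" "E t0 = Min (E ` {0..<T})"
    by auto
  have below_average: "real T * E t0 \<le> (\<Sum>t<T. E t)"
    using sum_mono[of "{..<T}" "\<lambda>_. E t0" E] t0(2) by (simp add: atLeast0LessThan)
  moreover have "Inf (range f) \<le> (\<integral>\<omega>. f (x T \<omega>) \<partial>M)"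
    using integral_mono[OF _ integrable_f_x, of "\<lambda>_. Inf (range f)"] bdd
    by (simp add: prob_space cInf_lower)
  ultimately have "(\<alpha> / 4) * (real T * E t0)
      \<le> f x0 - Inf (range f) + real T * (\<alpha>^3 * L\<^sup>2 * B\<^sup>2 / 2 + L * \<alpha>\<^sup>2 * \<sigma>\<^sup>2 / real p)"
    using telescoped_descent[of T] mult_left_mono[OF below_average, of "\<alpha> / 4"] alpha_pos
    unfolding E_def by linarith
  then have "E t0 \<le> (f x0 - Inf (range f) + real T * (\<alpha>^3 * L\<^sup>2 * B\<^sup>2 / 2 + L * \<alpha>\<^sup>2 * \<sigma>\<^sup>2 / real p))
      / ((\<alpha> / 4) * real T)"
    using alpha_pos assms by (simp add: pos_le_divide_eq ac_simps)
  also have "\<dots> = 4 * (f x0 - Inf (range f)) / (\<alpha> * real T) + 2 * \<alpha>\<^sup>2 * L\<^sup>2 * B\<^sup>2 + 4 * L * \<alpha> * \<sigma>\<^sup>2 / real p"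
    using alpha_pos assms by (simp add: add_divide_distrib power2_eq_square power3_eq_cube ac_simps)
  finally have bound: "E t0 \<le> 4 * (f x0 - Inf (range f)) / (\<alpha> * real T) + 2 * \<alpha>\<^sup>2 * L\<^sup>2 * B\<^sup>2
      + 4 * L * \<alpha> * \<sigma>\<^sup>2 / real p" .
  have "(MIN t\<in>{0..<T}. \<integral>\<^sup>+ \<omega>. ennreal ((norm (grad (x t \<omega>)))\<^sup>2) \<partial>M) \<le> ennreal (E t0)"
    using t0(1) integral_eq_nn_integral_power2_norm[OF square_integrable_grad_x]
    by (intro Min.coboundedI) (auto simp: E_def)
  then show ?thesis using ennreal_leI[OF bound] by (rule order_trans)
qed

end

section \<open>The step size \<open>\<surd>p/\<surd>T\<close>\<close>

lemma sqrt_step_size_small: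
  fixes L P T :: real
  assumes "L \<ge> 0" "P > 0" "T \<ge> 64 * L\<^sup>2 * P"
  shows "L * (sqrt P / sqrt T) \<le> 1/8"
proof (cases "T > 0")
  case True
  have "(L * (sqrt P / sqrt T))\<^sup>2 = L\<^sup>2 * P / T"
    using assms True by (simp add: power_mult_distrib power_divide)
  also have "\<dots> \<le> (1/8)\<^sup>2"
    using assms True by (simp add: power2_eq_square pos_divide_le_eq)
  finally show ?thesis by (rule power2_le_imp_le) simp
next
  case False
  have "0 \<le> 64 * L\<^sup>2 * P" using assms(2) by simp
  then have "T = 0" using assms(3) False by linarith
  then show ?thesis by simp
qed

lemma sqrt_step_size_rate_le:
  fixes \<Delta> L B \<sigma> P T :: real
  assumes "\<Delta> \<ge> 0" "L \<ge> 0" "P > 0" "T > 0"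
  defines "\<alpha> \<equiv> sqrt P / sqrt T"
  shows "4 * \<Delta> / (\<alpha> * T) + 2 * \<alpha>\<^sup>2 * L\<^sup>2 * B\<^sup>2 + 4 * L * \<alpha> * \<sigma>\<^sup>2 / P
    \<le> 8 * \<Delta> / sqrt (T * P) + 4 * B\<^sup>2 * L\<^sup>2 * P / T + 8 * L * \<sigma>\<^sup>2 / sqrt (T * P)
      + 16 * L^3 * B\<^sup>2 * P * sqrt P / (T * sqrt T)"
proof -
  have \<alpha>T: "\<alpha> * T = sqrt (T * P)" and \<alpha>2: "\<alpha>\<^sup>2 = P / T" and \<alpha>P: "\<alpha> / P = 1 / sqrt (T * P)"
    using assms(3,4) by (auto simp: \<alpha>_def real_sqrt_mult field_simps)
  have "4 * \<Delta> / sqrt (T * P) \<le> 8 * \<Delta> / sqrt (T * P)"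
    using assms(1,3,4) by (intro divide_right_mono) auto
  moreover have "2 * (P / T) * L\<^sup>2 * B\<^sup>2 \<le> 4 * B\<^sup>2 * L\<^sup>2 * P / T"
    using assms(3,4) by (simp add: field_simps)
  moreover have "4 * L * \<sigma>\<^sup>2 / sqrt (T * P) \<le> 8 * L * \<sigma>\<^sup>2 / sqrt (T * P)"
    using assms(2,3,4) by (intro divide_right_mono) auto
  moreover have "0 \<le> 16 * L^3 * B\<^sup>2 * P * sqrt P / (T * sqrt T)"
    using assms(2,3,4) by simp
  moreover have "4 * L * \<alpha> * \<sigma>\<^sup>2 / P = 4 * L * \<sigma>\<^sup>2 * (\<alpha> / P)"
    by simp
  moreover have "\<dots> = 4 * L * \<sigma>\<^sup>2 / sqrt (T * P)"
    unfolding \<alpha>P by simp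
  ultimately show ?thesis
    unfolding \<alpha>T \<alpha>2 by linarith
qed

theorem theorem2:
  fixes M :: "'a measure"
    and F :: "nat \<Rightarrow> 'a measure"
    and f :: "'v::euclidean_space \<Rightarrow> real"
    and grad :: "'v \<Rightarrow> 'v"
    and L B \<sigma> \<alpha> :: real
    and p T :: nat
    and I :: "nat \<Rightarrow> nat set"
    and x :: "nat \<Rightarrow> 'a \<Rightarrow> 'v"
    and v G :: "nat \<Rightarrow> nat \<Rightarrow> 'a \<Rightarrow> 'v"
    and x0 :: 'v
  assumes prob: "prob_space M"
    and filt_sub: "\<And>t. subalgebra M (F t)"
    and filt_mono: "\<And>s t. s \<le> t \<Longrightarrow> sets (F s) \<subseteq> sets (F t)"
    and grad_f: "\<And>y. (f has_derivative (\<lambda>h. grad y \<bullet> h)) (at y)"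
    and L_pos: "L > 0"
    and lipschitz: "\<And>y z. norm (grad y - grad z) \<le> L * norm (y - z)"
    and bdd: "bdd_below (range f)"
    and p_pos: "p \<ge> 1"
    and I_sub: "\<And>t. I t \<subseteq> {1..p}"
    and I_card: "\<And>t. real p / 2 \<le> real (card (I t))"
    and x_0: "\<And>\<omega>. x 0 \<omega> = x0"
    and x_meas: "\<And>t. x t \<in> borel_measurable (F t)"
    and v_meas: "\<And>t i. i \<in> I t \<Longrightarrow> v t i \<in> borel_measurable (F t)"
    and G_meas: "\<And>t i. i \<in> I t \<Longrightarrow> G t i \<in> borel_measurable (F (Suc t))"
    and G_indep: "\<And>t. cond_indep_vars M (F t) (G t) (I t)"
    and G_int: "\<And>t i. i \<in> I t \<Longrightarrow> integrable M (G t i)"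
    and G_unbiased: "\<And>t i b. i \<in> I t \<Longrightarrow> b \<in> Basis \<Longrightarrow>
        AE \<omega> in M. real_cond_exp M (F t) (\<lambda>\<omega>. G t i \<omega> \<bullet> b) \<omega> = grad (v t i \<omega>) \<bullet> b"
    and G_var: "\<And>t i. i \<in> I t \<Longrightarrow>
        AE \<omega> in M. nn_cond_exp M (F t) (\<lambda>\<omega>. ennreal ((norm (G t i \<omega> - grad (v t i \<omega>)))\<^sup>2)) \<omega>
          \<le> ennreal (\<sigma>\<^sup>2)"
    and alpha_def: "\<alpha> = sqrt (real p) / sqrt (real T)"
    and T_large: "real T \<ge> 64 * L\<^sup>2 * real p"
    and update: "\<And>t \<omega>. \<omega> \<in> space M \<Longrightarrow>
        x (Suc t) \<omega> = x t \<omega> - (\<alpha> / real p) *\<^sub>R (\<Sum>i\<in>I t. G t i \<omega>)"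
    and B_pos: "B > 0"
    and elastic: "\<And>t i. i \<in> I t \<Longrightarrow>
        (\<integral>\<^sup>+ \<omega>. ennreal ((norm (x t \<omega> - v t i \<omega>))\<^sup>2) \<partial>M) \<le> ennreal (\<alpha>\<^sup>2 * B\<^sup>2)"
  shows "(MIN t\<in>{0..<T}. \<integral>\<^sup>+ \<omega>. ennreal ((norm (grad (x t \<omega>)))\<^sup>2) \<partial>M)
     \<le> ennreal (8 * (f x0 - Inf (range f)) / sqrt (real T * real p)
              + 4 * B\<^sup>2 * L\<^sup>2 * real p / real T
              + 8 * L * \<sigma>\<^sup>2 / sqrt (real T * real p)
              + 16 * L^3 * B\<^sup>2 * real p * sqrt (real p) / (real T * sqrt (real T)))"
proof -
  have p: "real p > 0" using p_pos by simp
  have "0 < 64 * L\<^sup>2 * real p" using L_pos p by simp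
  then have T: "real T > 0" using T_large by linarith
  have "L * \<alpha> \<le> 1/8"
    unfolding alpha_def using L_pos p T_large by (intro sqrt_step_size_small) auto
  then have small: "L * \<alpha> \<le> 1/2" by simp
  have alpha_pos: "\<alpha> > 0" using p T by (simp add: alpha_def)
  interpret parallel_sgd M F f grad L B \<sigma> \<alpha> p I x v G x0
    by (rule parallel_sgd.intro) (fact assms alpha_pos small less_imp_le[OF L_pos])+
  have "0 \<le> f x0 - Inf (range f)"
    using bdd by (simp add: cInf_lower)
  from sqrt_step_size_rate_le[OF this less_imp_le[OF L_pos] p T, of B \<sigma>, folded alpha_def]
  have rate: "ennreal (4 * (f x0 - Inf (range f)) / (\<alpha> * real T) + 2 * \<alpha>\<^sup>2 * L\<^sup>2 * B\<^sup>2
      + 4 * L * \<alpha> * \<sigma>\<^sup>2 / real p)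
    \<le> ennreal (8 * (f x0 - Inf (range f)) / sqrt (real T * real p) + 4 * B\<^sup>2 * L\<^sup>2 * real p / real T
      + 8 * L * \<sigma>\<^sup>2 / sqrt (real T * real p)
      + 16 * L^3 * B\<^sup>2 * real p * sqrt (real p) / (real T * sqrt (real T)))"
    by (rule ennreal_leI)
  show ?thesis
    using min_expected_grad_norm_le T rate by (meson of_nat_0_less_iff order_trans)
qed

end
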